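(* Let $f\in\mathcal{E}$ be minimal and suppose $d(f^n)$ has linear growth. Then the centralizer $C(f)=\{g\in\mathcal{E}: fg=gf\}$ is virtually cyclic.
   Context: Identify $\mathbb{T}^1=\mathbb{R}/\mathbb{Z}$ with $[0,1)$. An interval exchange transformation is a bijection $f:\mathbb{T}^1\to\mathbb{T}^1$ for which there is a partition of $[0,1)$ into finitely many half-open intervals $[a,b)$ on each of which $f$ is a translation $x\mapsto x+c\pmod 1$. $\mathcal{E}$ is the group of interval exchanges. $d(f)$ is the number of points at which $f$ is discontinuous as a map of the circle $\mathbb{T}^1$. $f$ is minimal if every $f$-orbit is dense in $\mathbb{T}^1$. Linear growth of $d(f^n)$ means there is $c>0$ with $d(f^n)\ge c|n|$ for all sufficiently large $|n|$ (for interval exchanges, $d(f^n)$ is either bounded or grows linearly). *)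

theory Defs
  imports "HOL-Analysis.Analysis"
begin

text \<open>The circle T^1 = R/Z is identified with [0,1). An interval exchange is
represented by a real function that is a bijection of [0,1) and (by convention)
the identity outside [0,1), so that composition and equality of maps are global.\<close>

definition iet :: "(real \<Rightarrow> real) \<Rightarrow> bool" where
  "iet f \<longleftrightarrow> bij_betw f {0..<1} {0..<1} \<and> (\<forall>x. x \<notin> {0..<1} \<longrightarrow> f x = x) \<and>
     (\<exists>(a::nat \<Rightarrow> real) (n::nat). a 0 = 0 \<and> a n = 1 \<and> (\<forall>i<n. a i < a (Suc i)) \<and>
        (\<forall>i<n. \<exists>c. \<forall>x. a i \<le> x \<and> x < a (Suc i) \<longrightarrow> f x = frac (x + c)))"

definition ipow :: "(real \<Rightarrow> real) \<Rightarrow> int \<Rightarrow> (real \<Rightarrow> real)" where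
  "ipow f n = (if 0 \<le> n then f ^^ nat n else (inv f) ^^ nat (- n))"

text \<open>Number of discontinuity points of f as a map of the circle: x is a
continuity point iff t \<mapsto> e(f(frac t)) is continuous at x, where e embeds the circle.\<close>
definition disc :: "(real \<Rightarrow> real) \<Rightarrow> nat" where
  "disc f = card {x \<in> {0..<1}. \<not> isCont (\<lambda>t. cis (2 * pi * f (frac t))) x}"

definition minimal_iet :: "(real \<Rightarrow> real) \<Rightarrow> bool" where
  "minimal_iet f \<longleftrightarrow> (\<forall>x\<in>{0..<1}. {0..<1} \<subseteq> closure {ipow f n x | n. True})"

definition linear_growth :: "(real \<Rightarrow> real) \<Rightarrow> bool" where
  "linear_growth f \<longleftrightarrow> (\<exists>c>0. \<exists>N. \<forall>n::int. N \<le> \<bar>n\<bar> \<longrightarrow> c * of_int \<bar>n\<bar> \<le> real (disc (ipow f n)))"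

definition centralizer :: "(real \<Rightarrow> real) \<Rightarrow> (real \<Rightarrow> real) set" where
  "centralizer f = {g. iet g \<and> f \<circ> g = g \<circ> f}"

definition virtually_cyclic :: "(real \<Rightarrow> real) set \<Rightarrow> bool" where
  "virtually_cyclic C \<longleftrightarrow> (\<exists>h\<in>C. \<exists>F. finite F \<and> F \<subseteq> C \<and>
       C = (\<Union>k\<in>F. (\<lambda>n. k \<circ> ipow h n) ` UNIV))"

end

theory Submission
  imports Defs
begin

text \<open>By minimality no orbit of f is periodic, so an orbit meets a finite set only finitely
  often, and an element of C(f) is determined by its value at a single point: it is determined
  along the dense orbit of that point, and near every point it is a translation.

  Call x a persistent discontinuity if it is a discontinuity of f^n for all large n. Every other
  discontinuity of f^n lies on one of boundedly many orbit segments running from a discontinuity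
  of f to one of f^-1, so linear growth of d(f^n) forces infinitely many persistent
  discontinuities. They lie in the backward orbits of the finitely many discontinuities of f, so
  infinitely many lie in the backward orbit of a single one, b. An element g of C(f) maps the
  persistent discontinuities outside its own finitely many discontinuities to persistent ones,
  hence g(b) lies in the orbit of one of the finitely many discontinuities of f. Finally, if g(b)
  and k(b) lie in one orbit then f^a \<circ> g and f^c \<circ> k agree at b, so g = k \<circ> f^(c-a).\<close>

section \<open>Interval exchanges as piecewise translations\<close>

text \<open>u is a translation mod 1 between consecutive points of the finite cut set P: an unordered
  form of the partition in iet_def.\<close>
definition translation_breaks :: "(real \<Rightarrow> real) \<Rightarrow> real set \<Rightarrow> bool" where
  "translation_breaks u P \<longleftrightarrow> finite P \<and> P \<subseteq> {0..<1} \<and> 0 \<in> P \<and>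
     (\<forall>x y. 0 \<le> x \<longrightarrow> x \<le> y \<longrightarrow> y < 1 \<longrightarrow> (\<forall>p\<in>P. \<not> (x < p \<and> p \<le> y)) \<longrightarrow>
        u y = frac (u x + (y - x)))"

lemma translation_breaksI:
  assumes "finite P" "P \<subseteq> {0..<1}" "0 \<in> P"
    and "\<And>x y. 0 \<le> x \<Longrightarrow> x \<le> y \<Longrightarrow> y < 1 \<Longrightarrow> (\<And>p. p \<in> P \<Longrightarrow> \<not> (x < p \<and> p \<le> y)) \<Longrightarrow>
           u y = frac (u x + (y - x))"
  shows "translation_breaks u P"
  using assms unfolding translation_breaks_def by meson

lemma translation_breaksD:
  assumes "translation_breaks u P"
  shows "finite P" "P \<subseteq> {0..<1}" "0 \<in> P"
    and "\<And>x y. 0 \<le> x \<Longrightarrow> x \<le> y \<Longrightarrow> y < 1 \<Longrightarrow> (\<And>p. p \<in> P \<Longrightarrow> \<not> (x < p \<and> p \<le> y)) \<Longrightarrow>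
           u y = frac (u x + (y - x))"
  using assms unfolding translation_breaks_def by meson+

lemma translation_breaks_gap:
  assumes "translation_breaks u P" "0 \<le> a" "a \<le> t" "t < b" "b \<le> 1"
    and "\<And>p. p \<in> P \<Longrightarrow> a < p \<Longrightarrow> b \<le> p"
  shows "u t = frac (u a + (t - a))"
proof (rule translation_breaksD(4)[OF assms(1)])
  fix p assume "p \<in> P"
  then show "\<not> (a < p \<and> p \<le> t)" using assms(4,6) by force
qed (use assms in auto)

lemma finite_greatest_such:
  fixes S :: "'a::linorder set"
  assumes "finite S" "a \<in> S" "Q a"
  obtains l where "l \<in> S" "Q l" "\<And>p. p \<in> S \<Longrightarrow> Q p \<Longrightarrow> p \<le> l"
proof -
  let ?S = "{p \<in> S. Q p}"
  have fin: "finite ?S" and ne: "?S \<noteq> {}" using assms by auto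
  have "Max ?S \<in> ?S" using Max_in[OF fin ne] .
  moreover have "p \<le> Max ?S" if "p \<in> ?S" for p using Max_ge[OF fin that] .
  ultimately show thesis using that[of "Max ?S"] by blast
qed

lemma finite_least_such:
  fixes S :: "'a::linorder set"
  assumes "finite S" "a \<in> S" "Q a"
  obtains r where "r \<in> S" "Q r" "\<And>p. p \<in> S \<Longrightarrow> Q p \<Longrightarrow> r \<le> p"
proof -
  let ?S = "{p \<in> S. Q p}"
  have fin: "finite ?S" and ne: "?S \<noteq> {}" using assms by auto
  have "Min ?S \<in> ?S" using Min_in[OF fin ne] .
  moreover have "Min ?S \<le> p" if "p \<in> ?S" for p using Min_le[OF fin that] .
  ultimately show thesis using that[of "Min ?S"] by blast
qed

lemma next_break:
  fixes P :: "real set"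
  assumes "finite P" "x < 1"
  obtains r where "x < r" "r \<le> 1" "r \<in> insert 1 P" "\<And>p. p \<in> P \<Longrightarrow> x < p \<Longrightarrow> r \<le> p"
proof -
  obtain r where "r \<in> insert 1 P" "x < r" and r: "\<And>p. p \<in> insert 1 P \<Longrightarrow> x < p \<Longrightarrow> r \<le> p"
    using finite_least_such[of "insert 1 P" 1 "\<lambda>p. x < p"] assms by auto
  then show thesis using that r[of 1] assms(2) by blast
qed

lemma iet_translation_breaks:
  assumes "iet u"
  obtains P where "translation_breaks u P"
proof -
  from assms obtain a :: "nat \<Rightarrow> real" and n where a0: "a 0 = 0" and an: "a n = 1"
    and inc: "\<forall>i<n. a i < a (Suc i)"
    and pieces: "\<forall>i<n. \<exists>c. \<forall>x. a i \<le> x \<and> x < a (Suc i) \<longrightarrow> u x = frac (x + c)"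
    unfolding iet_def by blast
  have n0: "0 < n" using a0 an by (cases n) auto
  have less: "a i < a j" if "i < j" "j \<le> n" for i j
  proof (rule lift_Suc_mono_less_ivl[of "{..<n}" a i j])
    show "{i..<j} \<subseteq> {..<n}" using that by auto
  qed (use inc that in auto)
  have a_range: "0 \<le> a i \<and> a i < 1" if "i < n" for i
    using less[of 0 i] less[of i n] that a0 an by (cases "i = 0") auto
  show thesis
  proof (rule that, rule translation_breaksI)
    show "finite (a ` {..<n})" "0 \<in> a ` {..<n}" using a0 n0 by force+
    show "a ` {..<n} \<subseteq> {0..<1}" using a_range by auto
    fix x y assume x0: "0 \<le> x" and xy: "x \<le> y" and y1: "y < 1"
      and gap: "\<And>p. p \<in> a ` {..<n} \<Longrightarrow> \<not> (x < p \<and> p \<le> y)"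
    obtain i where i: "i < n" "a i \<le> x" and imax: "\<And>j. j < n \<Longrightarrow> a j \<le> x \<Longrightarrow> j \<le> i"
      using finite_greatest_such[of "{..<n}" 0 "\<lambda>j. a j \<le> x"] a0 x0 n0 by auto
    have "y < a (Suc i)"
    proof (cases "Suc i < n")
      case True
      then show ?thesis using imax[of "Suc i"] gap[of "a (Suc i)"] by force
    next
      case False
      then have "Suc i = n" using i by simp
      then show ?thesis using an y1 by simp
    qed
    moreover obtain c where "\<forall>z. a i \<le> z \<and> z < a (Suc i) \<longrightarrow> u z = frac (z + c)"
      using pieces i by blast
    ultimately have "u x = frac (x + c)" "u y = frac (y + c)" using i xy by auto
    then show "u y = frac (u x + (y - x))" by (simp add: frac_add_simps add.commute)
  qed
qed

lemma iet_if_translation_breaks: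
  assumes "bij_betw u {0..<1} {0..<1}" "\<And>x. x \<notin> {0..<1} \<Longrightarrow> u x = x"
    and "translation_breaks u P"
  shows "iet u"
proof -
  note P = translation_breaksD[OF assms(3)]
  define l where "l = sorted_list_of_set (insert 1 P)"
  have sorted: "sorted_wrt (<) l" unfolding l_def by (rule strict_sorted_list_of_set)
  have set_l: "set l = insert 1 P" unfolding l_def by (rule set_sorted_list_of_set) (use P(1) in simp)
  define n where "n = length l - 1"
  have less: "l ! i < l ! j" if "i < j" "j < length l" for i j
    using sorted_wrt_nth_less[OF sorted that] .
  have le: "l ! i \<le> l ! j" if "i \<le> j" "j < length l" for i j
    using less[of i j] that by (cases "i = j") auto
  have range: "0 \<le> l ! i \<and> l ! i \<le> 1" if "i < length l" for i
    using nth_mem[OF that] set_l P(2) by auto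
  have "0 \<in> set l" "1 \<in> set l" using set_l P(3) by auto
  then obtain i0 i1 where i0: "i0 < length l" "l ! i0 = 0" and i1: "i1 < length l" "l ! i1 = 1"
    by (auto simp: in_set_conv_nth)
  have n: "n < length l" "0 < length l" using i0 n_def by auto
  have first: "l ! 0 = 0" using le[of 0 i0] range[of 0] i0 n by auto
  have last: "l ! n = 1" using le[of i1 n] range[of n] i1 n n_def by auto
  have pieces: "\<exists>c. \<forall>x. l ! i \<le> x \<and> x < l ! Suc i \<longrightarrow> u x = frac (x + c)" if i: "i < n" for i
  proof (intro exI allI impI)
    fix x assume x: "l ! i \<le> x \<and> x < l ! Suc i"
    have "l ! Suc i \<le> p" if "p \<in> P" "l ! i < p" for p
    proof -
      have "p \<in> set l" using that(1) set_l by auto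
      then obtain j where j: "j < length l" "l ! j = p" by (auto simp: in_set_conv_nth)
      have "i < length l" using i n_def by simp
      then have "i < j" using le[of j i] that(2) j by force
      then show ?thesis using le[of "Suc i" j] j by auto
    qed
    then have "u x = frac (u (l ! i) + (x - l ! i))"
      using translation_breaks_gap[OF assms(3), of "l ! i" x "l ! Suc i"] range i x n_def by auto
    then show "u x = frac (x + (u (l ! i) - l ! i))" by (simp add: algebra_simps)
  qed
  have steps: "\<forall>i<n. l ! i < l ! Suc i" using less n_def by simp
  have "\<exists>(a::nat \<Rightarrow> real) m. a 0 = 0 \<and> a m = 1 \<and> (\<forall>i<m. a i < a (Suc i)) \<and>
          (\<forall>i<m. \<exists>c. \<forall>x. a i \<le> x \<and> x < a (Suc i) \<longrightarrow> u x = frac (x + c))"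
    by (rule exI[of _ "nth l"], rule exI[of _ n]) (use first last steps pieces in blast)
  with assms(1,2) show ?thesis unfolding iet_def by blast
qed

lemma iet_fixes_outside: "iet u \<Longrightarrow> x \<notin> {0..<1} \<Longrightarrow> u x = x"
  unfolding iet_def by blast

lemma iet_bij_betw: "iet u \<Longrightarrow> bij_betw u {0..<1} {0..<1}"
  unfolding iet_def by blast

lemma iet_in_unit: "iet u \<Longrightarrow> x \<in> {0..<1} \<Longrightarrow> u x \<in> {0..<1}"
  using iet_bij_betw bij_betwE by blast

lemma iet_inj_on_unit: "iet u \<Longrightarrow> inj_on u {0..<1}"
  using iet_bij_betw bij_betw_imp_inj_on by blast

lemma iet_bij:
  assumes "iet u" shows "bij u"
proof -
  have "bij_betw u (- {0..<1}) (- {0..<1})"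
    using bij_betw_cong[of "- {0..<1}" u id] iet_fixes_outside[OF assms] by simp
  then have "bij_betw u ({0..<1} \<union> - {0..<1}) ({0..<1} \<union> - {0..<1})"
    using bij_betw_combine[OF iet_bij_betw[OF assms]] by blast
  then show ?thesis by simp
qed

lemma iet_id: "iet id"
proof (rule iet_if_translation_breaks)
  show "translation_breaks id {0}"
    by (rule translation_breaksI) (auto simp: frac_eq)
qed auto

lemma iet_comp:
  assumes u: "iet u" and v: "iet v" shows "iet (u \<circ> v)"
proof -
  obtain Pu where Pu: "translation_breaks u Pu" using iet_translation_breaks[OF u] .
  obtain Pv where Pv: "translation_breaks v Pv" using iet_translation_breaks[OF v] .
  note Pu' = translation_breaksD[OF Pu] and Pv' = translation_breaksD[OF Pv]
  define P where "P = Pv \<union> {x \<in> {0..<1}. v x \<in> Pu}"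
  have "translation_breaks (u \<circ> v) P"
  proof (rule translation_breaksI)
    have "{x \<in> {0..<1}. v x \<in> Pu} \<subseteq> v -` Pu" by auto
    then show "finite P"
      unfolding P_def using Pu'(1) Pv'(1) finite_vimageI[OF _ bij_is_inj[OF iet_bij[OF v]]]
      by (meson finite_Un finite_subset)
    show "P \<subseteq> {0..<1}" "0 \<in> P" unfolding P_def using Pv'(2,3) by auto
    fix x y assume x0: "0 \<le> x" and xy: "x \<le> y" and y1: "y < 1"
      and gap: "\<And>p. p \<in> P \<Longrightarrow> \<not> (x < p \<and> p \<le> y)"
    have v_lin: "v z = frac (v x + (z - x))" if "x \<le> z" "z \<le> y" for z
      using Pv'(4)[OF x0 that(1)] that y1 gap unfolding P_def by fastforce
    have vx: "v x \<in> {0..<1}" using iet_in_unit[OF v] x0 xy y1 by auto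
    have hits: "x + (q - v x) \<in> P" if "q \<in> Pu" "v x < q" "q \<le> v x + (y - x)" for q
    proof -
      have "q \<in> {0..<1}" using that(1) Pu'(2) by auto
      then have "v (x + (q - v x)) = q" using v_lin[of "x + (q - v x)"] that(2,3) by (simp add: frac_eq)
      then show ?thesis unfolding P_def using that x0 vx y1 by auto
    qed
    have no_wrap: "v x + (y - x) < 1"
    proof (rule ccontr)
      assume wrap: "\<not> v x + (y - x) < 1"
      define z where "z = x + (1 - v x)"
      have z: "x < z" "z \<le> y" using vx wrap unfolding z_def by auto
      then have "v z = 0" using v_lin[of z] unfolding z_def by simp
      then have "z \<in> P" unfolding P_def using Pu'(3) x0 y1 z by auto
      then show False using gap z by blast
    qed
    have vy: "v y = v x + (y - x)" using v_lin[of y] xy no_wrap vx by (simp add: frac_eq)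
    have "\<not> (v x < q \<and> q \<le> v y)" if "q \<in> Pu" for q
      using hits[OF that] gap[of "x + (q - v x)"] vy by auto
    then have "u (v y) = frac (u (v x) + (v y - v x))"
      using Pu'(4)[of "v x" "v y"] vx vy xy no_wrap by auto
    then show "(u \<circ> v) y = frac ((u \<circ> v) x + (y - x))" using vy by simp
  qed
  moreover have "bij_betw (u \<circ> v) {0..<1} {0..<1}"
    using bij_betw_trans iet_bij_betw[OF v] iet_bij_betw[OF u] by blast
  ultimately show ?thesis
    using iet_if_translation_breaks iet_fixes_outside[OF u] iet_fixes_outside[OF v] by fastforce
qed

lemma iet_reaches_break_image:
  assumes u: "iet u" and P: "translation_breaks u P" and x: "x \<in> {0..<1}"
    and r: "x < r" "r \<in> insert 1 P" "\<And>p. p \<in> P \<Longrightarrow> x < p \<Longrightarrow> r \<le> p"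
    and no_wrap: "u x + (r - x) < 1"
  shows "u x + (r - x) \<in> u ` P"
proof -
  note P' = translation_breaksD[OF P]
  define w where "w = u x + (r - x)"
  have r1: "r \<le> 1" using r(2) P'(2) by auto
  have ux: "u x \<in> {0..<1}" using iet_in_unit[OF u x] .
  have "w \<in> {0..<1}" using ux r(1) no_wrap unfolding w_def by auto
  then obtain z where z: "z \<in> {0..<1}" "u z = w"
    using iet_bij_betw[OF u] by (metis bij_betw_imp_surj_on imageE)
  obtain p where p: "p \<in> P" "p \<le> z" and p_max: "\<And>q. q \<in> P \<Longrightarrow> q \<le> z \<Longrightarrow> q \<le> p"
    using finite_greatest_such[of P 0 "\<lambda>q. q \<le> z"] P'(1,3) z(1) by auto
  have p0: "0 \<le> p" using p(1) P'(2) by auto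
  show ?thesis
  proof (cases "p = z")
    case True
    then have "u x + (r - x) = u p" using z(2) w_def by simp
    then show ?thesis using p(1) by blast
  next
    case False
    define e where "e = min (z - p) (r - x)"
    have e: "0 < e" "e \<le> z - p" "e \<le> r - x" using False p(2) r(1) unfolding e_def by auto
    have "u (r - e) = frac (u x + (r - e - x))"
      using translation_breaks_gap[OF P, of x "r - e" r] x e r(1,3) r1 by auto
    also have "\<dots> = w - e" using e ux no_wrap unfolding w_def by (simp add: frac_eq)
    finally have at_r: "u (r - e) = w - e" .
    have no_break: "\<not> (p < q \<and> q \<le> z)" if "q \<in> P" for q using p_max[OF that] by force
    have "u z = frac (u p + (z - p))" using P'(4)[OF p0 p(2)] z(1) no_break by auto
    moreover have "u (z - e) = frac (u p + (z - e - p))"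
      using P'(4)[OF p0, of "z - e"] no_break e z(1) by fastforce
    ultimately have "u (z - e) = frac (w - e)"
      using z(2) frac_add_simps(1)[of "u p + (z - p)" "- e"] by (simp add: algebra_simps)
    also have "\<dots> = w - e" using e ux no_wrap unfolding w_def by (simp add: frac_eq)
    finally have "u (z - e) = u (r - e)" using at_r by simp
    moreover have "z - e \<in> {0..<1}" "r - e \<in> {0..<1}" using e p0 z(1) x r(1) r1 by auto
    ultimately have "z = r" using inj_onD[OF iet_inj_on_unit[OF u]] by fastforce
    then have "r \<in> P" "u r = u x + (r - x)" using r(2) z w_def by auto
    then show ?thesis by (metis imageI)
  qed
qed

lemma iet_inv:
  assumes u: "iet u" shows "iet (inv u)"
proof -
  obtain P where P: "translation_breaks u P" using iet_translation_breaks[OF u] .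
  note P' = translation_breaksD[OF P]
  have bu: "bij u" using iet_bij[OF u] .
  have u_inv: "u (inv u s) = s" for s using bu by (simp add: bij_is_surj surj_f_inv_f)
  have image: "u ` {0..<1} = {0..<1}" using iet_bij_betw[OF u] by (simp add: bij_betw_def)
  have inv_image: "inv u ` {0..<1} = {0..<1}"
    using image_inv_f_f[OF bij_is_inj[OF bu], of "{0..<1}"] image by simp
  then have inv_unit: "inv u s \<in> {0..<1}" if "s \<in> {0..<1}" for s
    using that by blast
  have "translation_breaks (inv u) (insert 0 (u ` P))"
  proof (rule translation_breaksI)
    show "finite (insert 0 (u ` P))" using P'(1) by simp
    show "insert 0 (u ` P) \<subseteq> {0..<1}" using P'(2) image by auto
    show "0 \<in> insert 0 (u ` P)" by simp
    fix s s' assume s0: "0 \<le> s" and ss': "s \<le> s'" and s'1: "s' < 1"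
      and gap: "\<And>q. q \<in> insert 0 (u ` P) \<Longrightarrow> \<not> (s < q \<and> q \<le> s')"
    define x where "x = inv u s"
    have x: "x \<in> {0..<1}" "u x = s" unfolding x_def using inv_unit s0 ss' s'1 u_inv by auto
    obtain r where r: "x < r" "r \<le> 1" "r \<in> insert 1 P" "\<And>p. p \<in> P \<Longrightarrow> x < p \<Longrightarrow> r \<le> p"
      using next_break[OF P'(1)] x(1) by auto
    show "inv u s' = frac (inv u s + (s' - s))"
    proof (cases "x + (s' - s) < r")
      case True
      have "u (x + (s' - s)) = frac (s + (s' - s))"
        using translation_breaks_gap[OF P, of x "x + (s' - s)" r] x r True ss' by auto
      then have "u (x + (s' - s)) = s'" using s0 ss' s'1 by (simp add: frac_eq)
      then have "inv u s' = x + (s' - s)" using inv_f_eq[OF bij_is_inj[OF bu]] by blast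
      then show ?thesis using True r(2) x(1) ss' unfolding x_def by (simp add: frac_eq)
    next
      case False
      then have "u x + (r - x) \<in> u ` P"
        using iet_reaches_break_image[OF u P x(1) r(1,3,4)] x(2) s'1 by simp
      then show ?thesis using gap[of "u x + (r - x)"] False r(1) x(2) by auto
    qed
  qed
  moreover have "bij_betw (inv u) {0..<1} {0..<1}"
    using bij_betw_subset[OF bij_imp_bij_inv[OF bu] _ inv_image] by simp
  moreover have "inv u x = x" if "x \<notin> {0..<1}" for x
    using iet_fixes_outside[OF u that] inv_f_eq[OF bij_is_inj[OF bu]] by blast
  ultimately show ?thesis using iet_if_translation_breaks by blast
qed

lemma iet_funpow: "iet u \<Longrightarrow> iet (u ^^ n)"
  by (induction n) (auto simp: iet_id iet_comp)

lemma iet_ipow: "iet u \<Longrightarrow> iet (ipow u n)"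
  unfolding ipow_def using iet_funpow iet_inv by auto

section \<open>Discontinuities\<close>

lemma frac_eq_frac_iff: "frac a = frac b \<longleftrightarrow> (\<exists>n::int. a = b + of_int n)"
  by (metis frac_add_of_int_right frac_eqE)

lemma cis_2pi_eq_iff: "cis (2 * pi * a) = cis (2 * pi * b) \<longleftrightarrow> frac a = frac b"
proof -
  have "cis (2 * pi * a) = cis (2 * pi * b) \<longleftrightarrow> (\<exists>n::int. a = b + of_int n)"
  proof
    assume "cis (2 * pi * a) = cis (2 * pi * b)"
    then obtain n :: int
      where "\<i> * complex_of_real (2 * pi * a) = \<i> * complex_of_real (2 * pi * b) + of_int (2 * n) * pi * \<i>"
      unfolding cis_conv_exp exp_eq by blast
    then have "2 * pi * a = 2 * pi * (b + of_int n)"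
      by (auto dest!: arg_cong[where f = Im] simp: algebra_simps)
    then show "\<exists>n::int. a = b + of_int n" by auto
  next
    assume "\<exists>n::int. a = b + of_int n"
    then obtain n :: int where "a = b + of_int n" by blast
    then have "cis (2 * pi * a) = cis (2 * pi * b) * cis (2 * pi * of_int n)"
      by (simp add: cis_mult algebra_simps)
    then show "cis (2 * pi * a) = cis (2 * pi * b)" by simp
  qed
  then show ?thesis by (simp add: frac_eq_frac_iff)
qed

lemma cis_2pi_frac: "cis (2 * pi * frac a) = cis (2 * pi * a)"
  by (simp add: cis_2pi_eq_iff)

lemma isCont_cis_2pi_shift: "isCont (\<lambda>t. cis (2 * pi * (t + c))) x"
  unfolding cis_conv_exp by (intro continuous_intros)

definition circle_lift :: "(real \<Rightarrow> real) \<Rightarrow> real \<Rightarrow> complex" where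
  "circle_lift u t = cis (2 * pi * u (frac t))"

definition disc_points :: "(real \<Rightarrow> real) \<Rightarrow> real set" where
  "disc_points u = {x \<in> {0..<1}. \<not> isCont (circle_lift u) x}"

lemma disc_eq_card_disc_points: "disc u = card (disc_points u)"
  unfolding disc_def disc_points_def circle_lift_def[abs_def] ..

lemma disc_points_subset: "disc_points u \<subseteq> {0..<1}"
  unfolding disc_points_def by blast

lemma isCont_circle_lift_frac:
  assumes "isCont (circle_lift u) (frac s)" shows "isCont (circle_lift u) s"
proof -
  have periodic: "circle_lift u = (\<lambda>y. circle_lift u (y - of_int \<lfloor>s\<rfloor>))"
    unfolding circle_lift_def by (simp add: frac_def)
  have "isCont (\<lambda>y. y - of_int \<lfloor>s\<rfloor>) s" by (intro continuous_intros)
  moreover have "isCont (circle_lift u) ((\<lambda>y. y - of_int \<lfloor>s\<rfloor>) s)"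
    using assms by (simp add: frac_def)
  ultimately have "isCont (\<lambda>y. circle_lift u (y - of_int \<lfloor>s\<rfloor>)) s" by (rule isCont_o2)
  then show ?thesis using periodic by metis
qed

lemma circle_lift_locally_shift:
  assumes "\<forall>\<^sub>F t in nhds x. u (frac t) = frac (t + c)"
  shows "isCont (circle_lift u) x"
proof -
  have "\<forall>\<^sub>F t in nhds x. cis (2 * pi * (t + c)) = circle_lift u t"
    using assms by eventually_elim (simp add: circle_lift_def cis_2pi_frac)
  then have "isCont (\<lambda>t. cis (2 * pi * (t + c))) x = isCont (circle_lift u) x" by (rule isCont_cong)
  then show ?thesis using isCont_cis_2pi_shift by blast
qed

lemma iet_right_translation:
  assumes u: "iet u" and x: "x \<in> {0..<1}"
  obtains \<delta> c where "\<delta> > 0" "\<And>t. x \<le> t \<Longrightarrow> t < x + \<delta> \<Longrightarrow> u (frac t) = frac (t + c)"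
proof -
  obtain P where P: "translation_breaks u P" using iet_translation_breaks[OF u] .
  obtain r where r: "x < r" "r \<le> 1" "\<And>p. p \<in> P \<Longrightarrow> x < p \<Longrightarrow> r \<le> p"
    using next_break[OF translation_breaksD(1)[OF P], of x] x by auto
  have "u (frac t) = frac (t + (u x - x))" if "x \<le> t" "t < x + (r - x)" for t
    using translation_breaks_gap[OF P, of x t r] x r that by (simp add: frac_eq algebra_simps)
  then show thesis using that[of "r - x"] r(1) by simp
qed

lemma iet_left_translation:
  assumes u: "iet u" and x: "x \<in> {0..<1}"
  obtains \<delta> c where "\<delta> > 0" "\<And>t. x - \<delta> < t \<Longrightarrow> t < x \<Longrightarrow> u (frac t) = frac (t + c)"
proof -
  obtain P where P: "translation_breaks u P" using iet_translation_breaks[OF u] .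
  note P' = translation_breaksD[OF P]
  \<comment> \<open>approach x from the left inside [0,1]: at x = 0 this means approaching 1\<close>
  define y where "y = (if x = 0 then 1 else x)"
  have y: "0 < y" "y \<le> 1" "y - x \<in> \<int>" using x unfolding y_def by auto
  obtain l where l: "l \<in> P" "l < y" and l_max: "\<And>p. p \<in> P \<Longrightarrow> p < y \<Longrightarrow> p \<le> l"
    using finite_greatest_such[of P 0 "\<lambda>p. p < y"] P'(1,3) y(1) by auto
  have l0: "0 \<le> l" using l(1) P'(2) by auto
  have "u (frac t) = frac (t + ((y - x) + u l - l))" if "x - (y - l) < t" "t < x" for t
  proof -
    define s where "s = t + (y - x)"
    have s: "l < s" "s < y" using that unfolding s_def by auto
    have "frac t = s" using s l0 y(2) frac_add_int_right[OF y(3), of t] unfolding s_def by (simp add: frac_eq)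
    then have "u (frac t) = u s" by simp
    also have "\<dots> = frac (u l + (s - l))"
      using translation_breaks_gap[OF P l0 _ s(2) y(2)] s(1) l_max by force
    also have "\<dots> = frac (t + ((y - x) + u l - l))" unfolding s_def by (simp add: algebra_simps)
    finally show ?thesis .
  qed
  then show thesis using that[of "y - l"] l(2) by simp
qed

lemma disc_points_subset_breaks:
  assumes P: "translation_breaks u P" shows "disc_points u \<subseteq> P"
proof
  note P' = translation_breaksD[OF P]
  fix x assume "x \<in> disc_points u"
  then have x: "x \<in> {0..<1}" and disc: "\<not> isCont (circle_lift u) x"
    unfolding disc_points_def by auto
  show "x \<in> P"
  proof (rule ccontr)
    assume xP: "x \<notin> P"
    then have "0 < x" using x P'(3) by (cases "x = 0") auto
    then obtain l where l: "l \<in> P" "l < x" and l_max: "\<And>p. p \<in> P \<Longrightarrow> p < x \<Longrightarrow> p \<le> l"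
      using finite_greatest_such[of P 0 "\<lambda>p. p < x"] P'(1,3) by auto
    obtain r where r: "x < r" "r \<le> 1" "\<And>p. p \<in> P \<Longrightarrow> x < p \<Longrightarrow> r \<le> p"
      using next_break[OF P'(1), of x] x by auto
    have l0: "0 \<le> l" using l(1) P'(2) by auto
    have "p \<le> l \<or> r \<le> p" if "p \<in> P" for p
      using l_max[OF that] r(3)[OF that] xP that by force
    then have "u (frac t) = frac (t + (u l - l))" if "t \<in> {l<..<r}" for t
      using translation_breaks_gap[OF P l0, of t r] that l0 r(2)
      by (fastforce simp: frac_eq algebra_simps)
    moreover have "\<forall>\<^sub>F t in nhds x. t \<in> {l<..<r}"
      using l(2) r(1) by (intro eventually_nhds_in_open) auto
    ultimately have "isCont (circle_lift u) x"
      by (intro circle_lift_locally_shift[where c = "u l - l"]) (auto elim: eventually_mono)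
    then show False using disc by contradiction
  qed
qed

lemma finite_disc_points:
  assumes "iet u" shows "finite (disc_points u)"
proof -
  obtain P where "translation_breaks u P" using iet_translation_breaks[OF assms] .
  then show ?thesis using disc_points_subset_breaks translation_breaksD(1) finite_subset by blast
qed

lemma iet_translation_near_continuity_point:
  assumes u: "iet u" and x: "x \<in> {0..<1}" and cont: "x \<notin> disc_points u"
  obtains \<delta> c where "\<delta> > 0" "\<And>t. x - \<delta> < t \<Longrightarrow> t < x + \<delta> \<Longrightarrow> u (frac t) = frac (t + c)"
proof -
  obtain \<delta>1 c where \<delta>1: "\<delta>1 > 0"
    and right: "\<And>t. x \<le> t \<Longrightarrow> t < x + \<delta>1 \<Longrightarrow> u (frac t) = frac (t + c)"
    by (rule iet_right_translation[OF u x]) blast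
  obtain \<delta>2 c' where \<delta>2: "\<delta>2 > 0"
    and left: "\<And>t. x - \<delta>2 < t \<Longrightarrow> t < x \<Longrightarrow> u (frac t) = frac (t + c')"
    by (rule iet_left_translation[OF u x]) blast
  have left_limit: "(f \<longlongrightarrow> f x) (at_left x)" if "isCont f x" for f :: "real \<Rightarrow> complex"
    using tendsto_mono[OF at_le[OF subset_UNIV]] that unfolding isCont_def by blast
  have "isCont (circle_lift u) x" using cont x unfolding disc_points_def by blast
  moreover have "circle_lift u x = cis (2 * pi * (x + c))"
    using right[of x] \<delta>1 by (simp add: circle_lift_def cis_2pi_frac)
  ultimately have "(circle_lift u \<longlongrightarrow> cis (2 * pi * (x + c))) (at_left x)"
    using left_limit by metis
  moreover have "\<forall>\<^sub>F t in at_left x. t \<in> {x - \<delta>2<..<x}"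
    using \<delta>2 by (intro eventually_at_left_real) simp
  then have "\<forall>\<^sub>F t in at_left x. cis (2 * pi * (t + c')) = circle_lift u t"
    by eventually_elim (simp add: left circle_lift_def cis_2pi_frac)
  ultimately have "((\<lambda>t. cis (2 * pi * (t + c'))) \<longlongrightarrow> cis (2 * pi * (x + c))) (at_left x)"
    using tendsto_cong by fastforce
  moreover have "((\<lambda>t. cis (2 * pi * (t + c'))) \<longlongrightarrow> cis (2 * pi * (x + c'))) (at_left x)"
    using left_limit[OF isCont_cis_2pi_shift[where c = c']] .
  ultimately have "frac (x + c') = frac (x + c)"
    using tendsto_unique[OF trivial_limit_at_left_real] cis_2pi_eq_iff by metis
  then have same: "frac (t + c') = frac (t + c)" for t
    unfolding frac_eq_frac_iff by (simp add: algebra_simps)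
  have "u (frac t) = frac (t + c)" if "x - min \<delta>1 \<delta>2 < t" "t < x + min \<delta>1 \<delta>2" for t
    using right[of t] left[of t] same[of t] that by (cases "x \<le> t") auto
  then show thesis using that[of "min \<delta>1 \<delta>2"] \<delta>1 \<delta>2 by simp
qed

lemma disc_points_comp:
  assumes u: "iet u" and v: "iet v" and x: "x \<in> {0..<1}"
    and "x \<notin> disc_points v" and "v x \<notin> disc_points u"
  shows "x \<notin> disc_points (u \<circ> v)"
proof -
  obtain \<delta> c where \<delta>: "\<delta> > 0"
    and near: "\<And>t. x - \<delta> < t \<Longrightarrow> t < x + \<delta> \<Longrightarrow> v (frac t) = frac (t + c)"
    by (rule iet_translation_near_continuity_point[OF v x assms(4)]) blast
  have "\<forall>\<^sub>F t in nhds x. t \<in> {x - \<delta><..<x + \<delta>}"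
    using \<delta> by (intro eventually_nhds_in_open) auto
  then have shift: "\<forall>\<^sub>F t in nhds x. circle_lift u (t + c) = circle_lift (u \<circ> v) t"
    by eventually_elim (simp add: near circle_lift_def)
  have "isCont (circle_lift u) (v x)"
    using assms(5) iet_in_unit[OF v x] unfolding disc_points_def by blast
  then have "isCont (circle_lift u) (x + c)"
    using near[of x] \<delta> x isCont_circle_lift_frac by simp
  moreover have "isCont (\<lambda>t. t + c) x" by (intro continuous_intros)
  ultimately have "isCont (\<lambda>t. circle_lift u (t + c)) x"
    using isCont_o2 by fastforce
  then show ?thesis using isCont_cong[OF shift] unfolding disc_points_def by simp
qed

lemma disc_points_comp_subset:
  assumes "iet u" "iet v"
  shows "disc_points (u \<circ> v) \<subseteq> disc_points v \<union> {x. v x \<in> disc_points u}"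
  using disc_points_comp[OF assms] disc_points_subset by blast

lemma disc_points_id: "disc_points id = {}"
proof -
  have "isCont (circle_lift id) x" for x
    using isCont_cis_2pi_shift[where c = 0] by (simp add: circle_lift_def[abs_def] cis_2pi_frac)
  then show ?thesis unfolding disc_points_def by simp
qed

lemma disc_points_funpow:
  assumes "iet u" "x \<in> disc_points (u ^^ k)"
  shows "\<exists>i<k. (u ^^ i) x \<in> disc_points u"
  using assms(2)
proof (induction k)
  case 0
  then show ?case by (simp add: disc_points_id id_def[symmetric])
next
  case (Suc k)
  then have "x \<in> disc_points (u \<circ> u ^^ k)" by (simp only: funpow.simps)
  then have "x \<in> disc_points (u ^^ k) \<or> (u ^^ k) x \<in> disc_points u"
    using disc_points_comp_subset[OF assms(1) iet_funpow[OF assms(1)], of k] by blast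
  then show ?case using Suc.IH less_Suc_eq by blast
qed

section \<open>Powers and minimality\<close>

lemma funpow_commute_comp: "g \<circ> f = f \<circ> g \<Longrightarrow> g \<circ> f ^^ n = f ^^ n \<circ> g"
proof
  fix x assume "g \<circ> f = f \<circ> g"
  then have "g (f y) = f (g y)" for y by (metis comp_apply)
  then show "(g \<circ> f ^^ n) x = (f ^^ n \<circ> g) x" by (induction n) auto
qed

lemma inv_commute_comp:
  assumes "bij f" "g \<circ> f = f \<circ> g" shows "g \<circ> inv f = inv f \<circ> g"
proof
  fix y
  have "f (g (inv f y)) = g (f (inv f y))" using assms(2) by (metis comp_apply)
  also have "\<dots> = g y" using assms(1) by (simp add: bij_is_surj surj_f_inv_f)
  finally show "(g \<circ> inv f) y = (inv f \<circ> g) y" using assms(1) by (metis bij_inv_eq_iff comp_apply)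
qed

lemma ipow_commute_comp:
  assumes "bij f" "g \<circ> f = f \<circ> g" shows "g \<circ> ipow f n = ipow f n \<circ> g"
  unfolding ipow_def
  using funpow_commute_comp[OF assms(2)] funpow_commute_comp[OF inv_commute_comp[OF assms]] by auto

lemma inv_funpow_funpow_apply:
  fixes f :: "'a \<Rightarrow> 'a"
  assumes "bij f" shows "(inv f ^^ n) ((f ^^ n) x) = x"
  using inv_fn_o_fn_is_id[OF assms, of n] by (simp add: fun_eq_iff)

lemma inv_funpow_comp_funpow:
  fixes f :: "real \<Rightarrow> real"
  assumes f: "bij f" shows "inv f ^^ a \<circ> f ^^ b = ipow f (int b - int a)"
proof (cases "a \<le> b")
  case True
  then have "f ^^ b = f ^^ a \<circ> f ^^ (b - a)" by (simp add: funpow_add[symmetric])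
  moreover have "nat (int b - int a) = b - a" using True by simp
  ultimately show ?thesis using True inv_funpow_funpow_apply[OF f] by (simp add: fun_eq_iff ipow_def)
next
  case False
  then have "inv f ^^ a = inv f ^^ (a - b) \<circ> inv f ^^ b" by (simp add: funpow_add[symmetric])
  moreover have "nat (- (int b - int a)) = a - b" using False by simp
  ultimately show ?thesis using False inv_funpow_funpow_apply[OF f] by (simp add: fun_eq_iff ipow_def)
qed

lemma ipow_of_nat [simp]: "ipow f (int n) = f ^^ n"
  unfolding ipow_def by simp

lemma inv_funpow_funpow_diff:
  fixes f :: "real \<Rightarrow> real"
  assumes "bij f" "i \<le> n"
  shows "(inv f ^^ i) ((f ^^ n) x) = (f ^^ (n - i)) x"
  using inv_funpow_comp_funpow[OF assms(1), of i n] assms(2)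
  by (metis comp_apply of_nat_diff ipow_of_nat)

lemma ipow_orbit_of_periodic_point:
  fixes f :: "real \<Rightarrow> real"
  assumes f: "bij f" and p: "0 < p" and per: "(f ^^ p) x = x"
  shows "ipow f n x \<in> (\<lambda>j. (f ^^ j) x) ` {..<p}"
proof -
  have forward: "(f ^^ k) x \<in> (\<lambda>j. (f ^^ j) x) ` {..<p}" for k
    using funpow_mod_eq[OF per, of k] p by (metis imageI lessThan_iff mod_less_divisor)
  have "(f ^^ (k * p)) x = x" for k
    using per by (induction k) (simp_all add: funpow_add)
  moreover have "f ^^ (k * p) = f ^^ k \<circ> f ^^ (k * p - k)" for k
  proof -
    have "k \<le> k * p" using p by (cases p) auto
    then show ?thesis by (simp add: funpow_add[symmetric])
  qed
  ultimately have "(f ^^ k) ((f ^^ (k * p - k)) x) = x" for k by (metis comp_apply)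
  then have "(inv f ^^ k) x = (f ^^ (k * p - k)) x" for k
    by (metis inv_funpow_funpow_apply[OF f])
  then show ?thesis using forward unfolding ipow_def by simp
qed

lemma minimal_iet_aperiodic:
  assumes f: "iet f" and m: "minimal_iet f" and x: "x \<in> {0..<1}" and p: "0 < p"
  shows "(f ^^ p) x \<noteq> x"
proof
  assume "(f ^^ p) x = x"
  then have "{ipow f n x | n. True} \<subseteq> (\<lambda>j. (f ^^ j) x) ` {..<p}"
    using ipow_orbit_of_periodic_point[OF iet_bij[OF f] p] by blast
  then have "closure {ipow f n x | n. True} \<subseteq> (\<lambda>j. (f ^^ j) x) ` {..<p}"
    by (simp add: closure_minimal finite_imp_closed)
  then have "{0..<1} \<subseteq> (\<lambda>j. (f ^^ j) x) ` {..<p}" using m x unfolding minimal_iet_def by blast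
  then have "finite {0..<1::real}" using finite_subset by blast
  then show False using infinite_Ico[of "0::real" 1] by simp
qed

lemma minimal_iet_orbit_inj:
  assumes f: "iet f" and m: "minimal_iet f" and x: "x \<in> {0..<1}"
  shows "inj (\<lambda>n. (f ^^ n) x)"
proof (rule injI)
  have "(f ^^ a) x \<noteq> (f ^^ b) x" if "a < b" for a b
  proof -
    have "f ^^ b = f ^^ (b - a) \<circ> f ^^ a" using that by (simp add: funpow_add[symmetric])
    moreover have "(f ^^ (b - a)) ((f ^^ a) x) \<noteq> (f ^^ a) x"
      using minimal_iet_aperiodic[OF f m iet_in_unit[OF iet_funpow[OF f] x], of "b - a"] that by simp
    ultimately show ?thesis by simp
  qed
  then show "(f ^^ a) x = (f ^^ b) x \<Longrightarrow> a = b" for a b by (metis linorder_neqE_nat)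
qed

lemma minimal_iet_finite_visits:
  assumes "iet f" "minimal_iet f" "x \<in> {0..<1}" "finite S"
  shows "finite {n. (f ^^ n) x \<in> S}"
  using finite_vimageI[OF assms(4) minimal_iet_orbit_inj[OF assms(1-3)]] by (simp add: vimage_def)

text \<open>A commuting map is determined on the dense orbit of p, and both maps are translations
  just to the right of every point.\<close>
lemma centralizer_eq_if_agree:
  assumes f: "iet f" and m: "minimal_iet f" and u: "iet u" and v: "iet v"
    and cu: "u \<circ> f = f \<circ> u" and cv: "v \<circ> f = f \<circ> v" and p: "p \<in> {0..<1}" and e: "u p = v p"
  shows "u = v"
proof
  fix x
  have agree: "u (ipow f n p) = v (ipow f n p)" for n
    using ipow_commute_comp[OF iet_bij[OF f] cu, of n] ipow_commute_comp[OF iet_bij[OF f] cv, of n] e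
    by (metis comp_apply)
  show "u x = v x"
  proof (cases "x \<in> {0..<1}")
    case False
    then show ?thesis using iet_fixes_outside[OF u] iet_fixes_outside[OF v] by simp
  next
    case x: True
    obtain \<delta>1 c where \<delta>1: "\<delta>1 > 0" and u_near: "\<And>t. x \<le> t \<Longrightarrow> t < x + \<delta>1 \<Longrightarrow> u (frac t) = frac (t + c)"
      by (rule iet_right_translation[OF u x]) blast
    obtain \<delta>2 d where \<delta>2: "\<delta>2 > 0" and v_near: "\<And>t. x \<le> t \<Longrightarrow> t < x + \<delta>2 \<Longrightarrow> v (frac t) = frac (t + d)"
      by (rule iet_right_translation[OF v x]) blast
    define \<delta> where "\<delta> = min (min \<delta>1 \<delta>2) (1 - x)"
    have \<delta>: "0 < \<delta>" "\<delta> \<le> \<delta>1" "\<delta> \<le> \<delta>2" "\<delta> \<le> 1 - x" using \<delta>1 \<delta>2 x unfolding \<delta>_def by auto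
    have "x + \<delta> / 2 \<in> {0..<1}" using \<delta> x by auto
    then have "x + \<delta> / 2 \<in> closure {ipow f n p | n. True}"
      using m p unfolding minimal_iet_def by blast
    then obtain y where y: "y \<in> {ipow f n p | n. True}" "dist y (x + \<delta> / 2) < \<delta> / 2"
      using \<delta>(1) closure_approachable half_gt_zero by blast
    have "\<bar>y - (x + \<delta> / 2)\<bar> < \<delta> / 2" using y(2) by (simp add: dist_real_def)
    then have y_near: "x \<le> y" "y < x + \<delta>" by linarith+
    then have "y \<in> {0..<1}" using x \<delta> by auto
    then have "frac (y + c) = frac (y + d)"
      using u_near[of y] v_near[of y] y_near \<delta> agree y(1) by auto
    then have "frac (x + c) = frac (x + d)" unfolding frac_eq_frac_iff by simp
    then show ?thesis using u_near[of x] v_near[of x] \<delta>1 \<delta>2 x by simp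
  qed
qed

section \<open>Persistent discontinuities\<close>

definition persistent_disc :: "(real \<Rightarrow> real) \<Rightarrow> real set" where
  "persistent_disc f = {x \<in> {0..<1}. \<exists>N. \<forall>n\<ge>N. x \<in> disc_points (f ^^ n)}"

text \<open>Since f^n = f^-(n'-n) \<circ> f^n', a discontinuity of f^n that f^n' lacks comes from a
  discontinuity of f^-(n'-n), hence of f^-1, on the forward orbit after time n.\<close>
lemma disc_points_funpow_cancelled:
  assumes f: "iet f" and x: "x \<in> disc_points (f ^^ n)" and nn': "n \<le> n'"
    and x': "x \<notin> disc_points (f ^^ n')"
  shows "\<exists>j>n. (f ^^ j) x \<in> disc_points (inv f)"
proof -
  have bf: "bij f" using iet_bij[OF f] .
  have "f ^^ n = inv f ^^ (n' - n) \<circ> f ^^ n'"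
    using inv_funpow_comp_funpow[OF bf, of "n' - n" n'] nn' by (simp add: of_nat_diff)
  then have "(f ^^ n') x \<in> disc_points (inv f ^^ (n' - n))"
    using x x' disc_points_comp_subset[OF iet_funpow[OF iet_inv[OF f]] iet_funpow[OF f]] by auto
  then obtain i where i: "i < n' - n" "(inv f ^^ i) ((f ^^ n') x) \<in> disc_points (inv f)"
    using disc_points_funpow[OF iet_inv[OF f]] by blast
  then show ?thesis using inv_funpow_funpow_diff[OF bf, of i n'] by (intro exI[of _ "n' - i"]) auto
qed

lemma finite_transit_times:
  assumes f: "iet f" and m: "minimal_iet f"
  shows "finite {k. \<exists>b\<in>disc_points f. (f ^^ k) b \<in> disc_points (inv f)}"
proof -
  have "finite {k. (f ^^ k) b \<in> disc_points (inv f)}" if "b \<in> disc_points f" for b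
    using minimal_iet_finite_visits[OF f m _ finite_disc_points[OF iet_inv[OF f]]] that
      disc_points_subset by blast
  moreover have "{k. \<exists>b\<in>disc_points f. (f ^^ k) b \<in> disc_points (inv f)} =
      (\<Union>b\<in>disc_points f. {k. (f ^^ k) b \<in> disc_points (inv f)})" by auto
  ultimately show ?thesis using finite_disc_points[OF f] by auto
qed

text \<open>A non-persistent discontinuity of f^n sits on an orbit segment running from a
  discontinuity of f to one of f^-1; there are only finitely many such segments.\<close>
lemma disc_funpow_bounded:
  assumes f: "iet f" and m: "minimal_iet f" and fin: "finite (persistent_disc f)"
  obtains K where "\<And>n. disc (f ^^ n) \<le> K"
proof -
  define B where "B = disc_points f"
  define B' where "B' = disc_points (inv f)"
  define T where "T = {k. \<exists>b\<in>B. (f ^^ k) b \<in> B'}"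
  define M where "M = B \<times> (SIGMA k:T. {..<k})"
  have "finite T" unfolding T_def B_def B'_def using finite_transit_times[OF f m] .
  then have finM: "finite M" unfolding M_def B_def using finite_disc_points[OF f] by auto
  define seg where "seg n = (\<lambda>(b, k :: nat, t). (inv f ^^ (n - 1 - t)) b)" for n
  have cover: "disc_points (f ^^ n) \<subseteq> persistent_disc f \<union> seg n ` M" for n
  proof
    fix x assume x: "x \<in> disc_points (f ^^ n)"
    show "x \<in> persistent_disc f \<union> seg n ` M"
    proof (cases "x \<in> persistent_disc f")
      case False
      then obtain n' where "n \<le> n'" "x \<notin> disc_points (f ^^ n')"
        using x disc_points_subset unfolding persistent_disc_def by blast
      then obtain j where j: "n < j" "(f ^^ j) x \<in> B'"
        using disc_points_funpow_cancelled[OF f x] unfolding B'_def by blast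
      obtain i where i: "i < n" "(f ^^ i) x \<in> B"
        using disc_points_funpow[OF f x] unfolding B_def by blast
      have "f ^^ j = f ^^ (j - i) \<circ> f ^^ i"
        using i(1) j(1) by (simp add: funpow_add[symmetric])
      then have "(f ^^ (j - i)) ((f ^^ i) x) \<in> B'" using j(2) by simp
      then have "j - i \<in> T" unfolding T_def using i(2) by blast
      then have "((f ^^ i) x, j - i, n - 1 - i) \<in> M" unfolding M_def using i j by auto
      moreover have "seg n ((f ^^ i) x, j - i, n - 1 - i) = x"
        using i(1) inv_funpow_funpow_apply[OF iet_bij[OF f]] unfolding seg_def by simp
      ultimately show ?thesis by (metis UnI2 image_eqI)
    qed simp
  qed
  have "disc (f ^^ n) \<le> card (persistent_disc f) + card M" for n
  proof -
    have "disc (f ^^ n) \<le> card (persistent_disc f \<union> seg n ` M)"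
      unfolding disc_eq_card_disc_points using cover fin finM by (intro card_mono) auto
    also have "\<dots> \<le> card (persistent_disc f) + card (seg n ` M)" by (rule card_Un_le)
    also have "\<dots> \<le> card (persistent_disc f) + card M" using card_image_le[OF finM] by simp
    finally show ?thesis .
  qed
  then show thesis using that by blast
qed

lemma linear_growth_unbounded:
  assumes "linear_growth f" shows "\<exists>n. K < disc (f ^^ n)"
proof -
  obtain c N where c: "c > 0" and growth: "\<And>n::int. N \<le> \<bar>n\<bar> \<Longrightarrow> c * of_int \<bar>n\<bar> \<le> real (disc (ipow f n))"
    using assms unfolding linear_growth_def by blast
  obtain n1 :: nat where n1: "K / c < n1" using reals_Archimedean2 by blast
  define n where "n = max n1 (nat N)"
  have n: "K / c < n" "N \<le> int n" using n1 unfolding n_def by (auto simp: less_max_iff_disj)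
  have "real K < c * real n" using n(1) c by (simp add: field_simps)
  also have "\<dots> \<le> real (disc (f ^^ n))" using growth[of "int n"] n(2) by simp
  finally show ?thesis by auto
qed

lemma infinite_persistent_disc:
  assumes "iet f" "minimal_iet f" "linear_growth f"
  shows "infinite (persistent_disc f)"
  using disc_funpow_bounded[OF assms(1,2)] linear_growth_unbounded[OF assms(3)] not_less by metis

lemma persistent_disc_backward_orbit:
  assumes f: "iet f" and x: "x \<in> persistent_disc f"
  shows "\<exists>b\<in>disc_points f. \<exists>i. (f ^^ i) x = b"
proof -
  obtain N where "x \<in> disc_points (f ^^ N)" using x unfolding persistent_disc_def by blast
  then show ?thesis using disc_points_funpow[OF f] by blast
qed

text \<open>Conjugating f^n by g preserves its discontinuities away from those of g and of g^-1,
  and the orbit of g x meets the finite set of discontinuities of g^-1 only finitely often.\<close>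
lemma centralizer_maps_persistent_disc:
  assumes f: "iet f" and m: "minimal_iet f" and g: "g \<in> centralizer f"
    and x: "x \<in> persistent_disc f" and xg: "x \<notin> disc_points g"
  shows "g x \<in> persistent_disc f"
proof -
  have ig: "iet g" and cg: "g \<circ> f = f \<circ> g" using g unfolding centralizer_def by auto
  have bg: "bij g" using iet_bij[OF ig] .
  obtain N1 where N1: "\<And>n. N1 \<le> n \<Longrightarrow> x \<in> disc_points (f ^^ n)"
    using x unfolding persistent_disc_def by blast
  have gx: "g x \<in> {0..<1}" using x iet_in_unit[OF ig] unfolding persistent_disc_def by blast
  have "finite {n. (f ^^ n) (g x) \<in> disc_points (inv g)}"
    using minimal_iet_finite_visits[OF f m gx finite_disc_points[OF iet_inv[OF ig]]] .
  then obtain N2 where "\<forall>n\<in>{n. (f ^^ n) (g x) \<in> disc_points (inv g)}. n < N2"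
    unfolding finite_nat_set_iff_bounded by blast
  then have N2: "(f ^^ n) (g x) \<notin> disc_points (inv g)" if "N2 \<le> n" for n
    using that by force
  have "g x \<in> disc_points (f ^^ n)" if n: "max N1 N2 \<le> n" for n
  proof -
    have comm: "(f ^^ n) (g y) = g ((f ^^ n) y)" for y
      using funpow_commute_comp[OF cg, of n] by (metis comp_apply)
    have "inv g ((f ^^ n) (g y)) = (f ^^ n) y" for y
      unfolding comm using bg by (simp add: bij_is_inj)
    then have "f ^^ n = (inv g \<circ> f ^^ n) \<circ> g" by (simp add: fun_eq_iff)
    then have "x \<in> disc_points ((inv g \<circ> f ^^ n) \<circ> g)" using N1[of n] n by simp
    then have "g x \<in> disc_points (inv g \<circ> f ^^ n)"
      using disc_points_comp_subset[OF iet_comp[OF iet_inv[OF ig] iet_funpow[OF f]] ig] xg by blast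
    then have "g x \<in> disc_points (f ^^ n) \<or> (f ^^ n) (g x) \<in> disc_points (inv g)"
      using disc_points_comp_subset[OF iet_inv[OF ig] iet_funpow[OF f]] by blast
    then show ?thesis using N2[of n] n by simp
  qed
  then show ?thesis unfolding persistent_disc_def using gx by blast
qed

section \<open>The centralizer\<close>

definition same_orbit :: "(real \<Rightarrow> real) \<Rightarrow> real \<Rightarrow> real \<Rightarrow> bool" where
  "same_orbit f x y \<longleftrightarrow> (\<exists>i j. (f ^^ i) x = (f ^^ j) y)"

lemma same_orbit_through:
  assumes "same_orbit f x b" "same_orbit f y b" shows "same_orbit f x y"
proof -
  obtain i j i' j' where ij: "(f ^^ i) x = (f ^^ j) b" and ij': "(f ^^ i') y = (f ^^ j') b"
    using assms unfolding same_orbit_def by blast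
  have "(f ^^ (j' + i)) x = (f ^^ j') ((f ^^ j) b)" using ij by (simp add: funpow_add)
  also have "\<dots> = (f ^^ j) ((f ^^ j') b)" by (metis add.commute comp_apply funpow_add)
  also have "\<dots> = (f ^^ (j + i')) y" using ij' by (simp add: funpow_add)
  finally show ?thesis unfolding same_orbit_def by blast
qed

lemma centralizer_comp_ipow:
  assumes f: "iet f" and k: "k \<in> centralizer f" shows "k \<circ> ipow f n \<in> centralizer f"
proof -
  have kf: "f \<circ> k = k \<circ> f" and ik: "iet k" using k unfolding centralizer_def by auto
  have "ipow f n \<circ> f = f \<circ> ipow f n"
    using ipow_commute_comp[OF iet_bij[OF f], of f n] by simp
  then have "f \<circ> (k \<circ> ipow f n) = (k \<circ> ipow f n) \<circ> f" using kf by (metis comp_assoc)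
  then show ?thesis unfolding centralizer_def using iet_comp[OF ik iet_ipow[OF f]] by simp
qed

lemma centralizer_same_orbit_coset:
  assumes f: "iet f" and m: "minimal_iet f" and g: "g \<in> centralizer f" and k: "k \<in> centralizer f"
    and b: "b \<in> {0..<1}" and orbit: "same_orbit f (g b) (k b)"
  shows "\<exists>n. g = k \<circ> ipow f n"
proof -
  have bf: "bij f" using iet_bij[OF f] .
  obtain a c where ac: "(f ^^ a) (g b) = (f ^^ c) (k b)" using orbit unfolding same_orbit_def by blast
  have shifted: "iet (f ^^ j \<circ> h) \<and> (f ^^ j \<circ> h) \<circ> f = f \<circ> (f ^^ j \<circ> h)"
    if "h \<in> centralizer f" for h j
  proof -
    have hf: "h \<circ> f = f \<circ> h" and "iet h" using that unfolding centralizer_def by auto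
    have "(f ^^ j \<circ> h) \<circ> f = f \<circ> (f ^^ j \<circ> h)"
      using hf funpow_commute_comp[OF refl, of f j] by (metis comp_assoc)
    then show ?thesis using iet_comp[OF iet_funpow[OF f] \<open>iet h\<close>] by simp
  qed
  have "f ^^ a \<circ> g = f ^^ c \<circ> k"
    using centralizer_eq_if_agree[OF f m _ _ _ _ b] shifted[OF g, of a] shifted[OF k, of c] ac by simp
  then have "g = (inv f ^^ a \<circ> f ^^ c) \<circ> k"
    using inv_funpow_funpow_apply[OF bf, of a] by (simp add: fun_eq_iff) (metis comp_apply)
  also have "\<dots> = k \<circ> ipow f (int c - int a)"
    using inv_funpow_comp_funpow[OF bf] ipow_commute_comp[OF bf, of k] k
    unfolding centralizer_def by simp
  finally show ?thesis by blast
qed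

text \<open>Pigeonhole: every persistent discontinuity lies in the backward orbit of one of the
  finitely many discontinuities of f.\<close>
lemma persistent_disc_concentrates:
  assumes f: "iet f" and m: "minimal_iet f" and lg: "linear_growth f"
  obtains b where "b \<in> disc_points f" "infinite {x \<in> persistent_disc f. \<exists>i. (f ^^ i) x = b}"
proof -
  let ?Y = "\<lambda>b. {x \<in> persistent_disc f. \<exists>i. (f ^^ i) x = b}"
  have "persistent_disc f = (\<Union>b\<in>disc_points f. ?Y b)"
    using persistent_disc_backward_orbit[OF f] by blast
  moreover have "finite (\<Union>b\<in>disc_points f. ?Y b)" if "\<forall>b\<in>disc_points f. finite (?Y b)"
    using that finite_disc_points[OF f] by (intro finite_UN_I) auto
  ultimately have "\<not> (\<forall>b\<in>disc_points f. finite (?Y b))"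
    using infinite_persistent_disc[OF f m lg] by auto
  then show thesis using that by blast
qed

lemma centralizer_orbit_meets_disc:
  assumes f: "iet f" and m: "minimal_iet f" and g: "g \<in> centralizer f"
    and inf: "infinite {x \<in> persistent_disc f. \<exists>i. (f ^^ i) x = b}"
  shows "\<exists>b'\<in>disc_points f. same_orbit f (g b) b'"
proof -
  have ig: "iet g" and cg: "g \<circ> f = f \<circ> g" using g unfolding centralizer_def by auto
  have "infinite ({x \<in> persistent_disc f. \<exists>i. (f ^^ i) x = b} - disc_points g)"
    using inf finite_disc_points[OF ig] by auto
  then obtain q where "q \<in> {x \<in> persistent_disc f. \<exists>i. (f ^^ i) x = b} - disc_points g"
    using infinite_imp_nonempty by blast
  then obtain i where q: "q \<in> persistent_disc f" "q \<notin> disc_points g" and qi: "(f ^^ i) q = b"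
    by blast
  have "g q \<in> persistent_disc f" using centralizer_maps_persistent_disc[OF f m g q] .
  then obtain b' j where b': "b' \<in> disc_points f" "(f ^^ j) (g q) = b'"
    using persistent_disc_backward_orbit[OF f] by blast
  have "g b = (f ^^ i) (g q)" using funpow_commute_comp[OF cg, of i] qi by (metis comp_apply)
  then have "same_orbit f (g b) (g q)" unfolding same_orbit_def by (metis funpow_0)
  moreover have "same_orbit f b' (g q)" unfolding same_orbit_def using b'(2) by (metis funpow_0)
  ultimately show ?thesis using b'(1) same_orbit_through by blast
qed

lemma virtually_cyclic_if_finitely_many_classes:
  assumes h: "h \<in> C" and closed: "\<And>k n. k \<in> C \<Longrightarrow> k \<circ> ipow h n \<in> C" and B: "finite B"
    and covered: "\<And>g. g \<in> C \<Longrightarrow> \<exists>b\<in>B. R g b"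
    and coset: "\<And>g k b. g \<in> C \<Longrightarrow> k \<in> C \<Longrightarrow> R g b \<Longrightarrow> R k b \<Longrightarrow> \<exists>n. g = k \<circ> ipow h n"
  shows "virtually_cyclic C"
proof -
  define rep where "rep b = (SOME g. g \<in> C \<and> R g b)" for b
  define F where "F = rep ` {b \<in> B. \<exists>g\<in>C. R g b}"
  have rep: "rep b \<in> C \<and> R (rep b) b" if "g \<in> C" "R g b" for g b
    using someI_ex[of "\<lambda>g. g \<in> C \<and> R g b"] that unfolding rep_def by blast
  have "finite F" "F \<subseteq> C" unfolding F_def using B rep by auto
  moreover have "C \<subseteq> (\<Union>k\<in>F. range (\<lambda>n. k \<circ> ipow h n))"
  proof
    fix g assume g: "g \<in> C"
    then obtain b where b: "b \<in> B" "R g b" using covered by blast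
    then obtain n where "g = rep b \<circ> ipow h n" using coset[OF g] rep[OF g] by blast
    moreover have "rep b \<in> F" unfolding F_def using b g by blast
    ultimately show "g \<in> (\<Union>k\<in>F. range (\<lambda>n. k \<circ> ipow h n))" by blast
  qed
  moreover have "(\<Union>k\<in>F. range (\<lambda>n. k \<circ> ipow h n)) \<subseteq> C" using \<open>F \<subseteq> C\<close> closed by blast
  ultimately show ?thesis unfolding virtually_cyclic_def using h by blast
qed

theorem proposition5p3:
  fixes f :: "real \<Rightarrow> real"
  assumes "iet f" and "minimal_iet f" and "linear_growth f"
  shows "virtually_cyclic (centralizer f)"
proof -
  note f = assms(1) and m = assms(2)
  obtain b where b: "b \<in> disc_points f" "infinite {x \<in> persistent_disc f. \<exists>i. (f ^^ i) x = b}"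
    using persistent_disc_concentrates[OF assms] .
  show ?thesis
  proof (rule virtually_cyclic_if_finitely_many_classes
      [where B = "disc_points f" and R = "\<lambda>g b'. same_orbit f (g b) b'"])
    show "f \<in> centralizer f" unfolding centralizer_def using f by simp
    show "finite (disc_points f)" using finite_disc_points[OF f] .
    show "k \<circ> ipow f n \<in> centralizer f" if "k \<in> centralizer f" for k n
      using centralizer_comp_ipow[OF f that] .
    show "\<exists>b'\<in>disc_points f. same_orbit f (g b) b'" if "g \<in> centralizer f" for g
      using centralizer_orbit_meets_disc[OF f m that b(2)] .
    show "\<exists>n. g = k \<circ> ipow f n"
      if "g \<in> centralizer f" "k \<in> centralizer f" "same_orbit f (g b) b'" "same_orbit f (k b) b'"
      for g k b'
      using centralizer_same_orbit_coset[OF f m that(1,2)] same_orbit_through[OF that(3,4)]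
        b(1) disc_points_subset by blast
  qed
qed

end
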